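(* Let $M_{c,2}$ be the set of positive integers $n$ such that $g(n)-\gamma_c(X_n)\ge 2$. Then the set $\omega(M_{c,2})=\{\omega(n): n\in M_{c,2}\}$ is unbounded; that is, for every $N$ there is $n\in M_{c,2}$ with more than $N$ distinct prime factors.
   Context: For a positive integer $n$, the unitary Cayley graph $X_n$ is the graph on vertex set $\{0,1,\dots,n-1\}$ in which $a$ and $b$ are adjacent if and only if $\gcd(a-b,n)=1$. The Jacobsthal function $g(n)$ is the least positive integer $m$ such that every set of $m$ consecutive integers contains an integer coprime to $n$. A set $S$ of vertices of a graph is dominating if every vertex is in $S$ or adjacent to a vertex of $S$. A dominating cycle is a cycle in the graph whose vertex set is a dominating set; the cycle domination number $\gamma_c(G)$ is the minimum number of vertices of a dominating cycle of $G$ (for $X_n$ such a cycle always exists, e.g. $(0,1,\dots,n-1)$). $\omega(n)$ denotes the number of distinct prime factors of $n$. *)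

theory Defs
  imports "HOL-Computational_Algebra.Primes"
begin

definition ucayley_adj :: "nat \<Rightarrow> nat \<Rightarrow> nat \<Rightarrow> bool" where
  "ucayley_adj n a b \<longleftrightarrow> a < n \<and> b < n \<and> coprime (int a - int b) (int n)"

definition ucayley_cycle :: "nat \<Rightarrow> nat list \<Rightarrow> bool" where
  "ucayley_cycle n cs \<longleftrightarrow>
     length cs \<ge> 3 \<and> distinct cs \<and> set cs \<subseteq> {0..<n} \<and>
     (\<forall>i < length cs - 1. ucayley_adj n (cs ! i) (cs ! (i + 1))) \<and>
     ucayley_adj n (last cs) (hd cs)"

definition ucayley_dominating :: "nat \<Rightarrow> nat set \<Rightarrow> bool" where
  "ucayley_dominating n S \<longleftrightarrow> S \<subseteq> {0..<n} \<and>
     (\<forall>v < n. v \<in> S \<or> (\<exists>s \<in> S. ucayley_adj n v s))"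

definition cycle_domination_number :: "nat \<Rightarrow> nat" where
  "cycle_domination_number n =
     (LEAST k. \<exists>cs. ucayley_cycle n cs \<and> ucayley_dominating n (set cs) \<and> length cs = k)"

definition jacobsthal :: "nat \<Rightarrow> nat" where
  "jacobsthal n = (LEAST m. m > 0 \<and> (\<forall>a::int. \<exists>k \<in> {a..<a + int m}. coprime k (int n)))"

definition omega :: "nat \<Rightarrow> nat" where
  "omega n = card (prime_factors n)"

definition M_c2 :: "nat set" where
  "M_c2 = {n. n > 0 \<and> int (jacobsthal n) - int (cycle_domination_number n) \<ge> 2}"

end

theory Submission
  imports Defs "HOL-Number_Theory.Cong"
begin

text \<open>Take \<open>n = 30 p\<^sub>1 \<cdots> p\<^sub>k\<close> with \<open>k = 8t + 3\<close> distinct primes larger than \<open>30 (30t + 16)\<close>.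
  In \<open>X\<^sub>3\<^sub>0\<close> take the closed walk that runs \<open>t\<close> times through \<open>0, 1, \<dots>, 29\<close> and then through
  16 further residues, and lift its \<open>j\<close>-th residue \<open>r\<^sub>j\<close> to the vertex \<open>30 j + r\<^sub>j\<close> of \<open>X\<^sub>n\<close>. All
  differences of these \<open>30t + 16\<close> vertices are smaller than every \<open>p\<^sub>i\<close>, so they form a cycle
  in \<open>X\<^sub>n\<close>. The cycle dominates: modulo 30 every \<open>y\<close> is adjacent to at least \<open>8t + 4\<close> of its
  vertices, and each \<open>p\<^sub>i\<close> divides \<open>y - v\<close> for at most one vertex \<open>v\<close>. Hence
  \<open>\<gamma>\<^sub>c(X\<^sub>n) \<le> 30t + 16\<close>. On the other hand, exactly \<open>8t + 3\<close> of the \<open>30t + 17\<close> integers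
  \<open>20, \<dots>, 30t + 36\<close> are coprime to 30; by the Chinese remainder theorem we can shift them
  so that each of these is divisible by its own \<open>p\<^sub>i\<close> while the others keep a common factor
  with 30. So \<open>g(n) \<ge> 30t + 18\<close>, and \<open>\<omega>(n) \<ge> 8t + 3\<close>.\<close>

lemma card_filter_upt: "card {j \<in> {a..<b}. P j} = length (filter P [a..<b])"
proof -
  have "{j \<in> {a..<b}. P j} = set (filter P [a..<b])" by auto
  then show ?thesis by (metis distinct_card distinct_filter distinct_upt)
qed

lemma card_mod_window:
  fixes m a :: nat
  assumes "m > 0"
  shows "card {j \<in> {a..<a + m}. Q (j mod m)} = card {i \<in> {..<m}. Q i}"
proof -
  have "bij_betw (\<lambda>j. j mod m) {a..<a + m} {..<m}"
  proof (rule bij_betw_imageI)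
    show "inj_on (\<lambda>j. j mod m) {a..<a + m}"
    proof (rule inj_onI)
      have "i = j" if "i \<le> j" "i \<in> {a..<a + m}" "j \<in> {a..<a + m}" "i mod m = j mod m" for i j
      proof -
        have "m dvd j - i" using that mod_eq_dvd_iff_nat[of i j m] by simp
        moreover have "j - i < m" using that by auto
        ultimately show "i = j"
          using \<open>i \<le> j\<close> by (metis nat_dvd_not_less le_antisym diff_is_0_eq not_gr0)
      qed
      then show "i = j" if "i \<in> {a..<a + m}" "j \<in> {a..<a + m}" "i mod m = j mod m" for i j
        using that nat_le_linear by metis
    qed
    then have "card ((\<lambda>j. j mod m) ` {a..<a + m}) = card {..<m}"
      by (simp add: card_image)
    moreover have "(\<lambda>j. j mod m) ` {a..<a + m} \<subseteq> {..<m}" using assms by auto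
    ultimately show "(\<lambda>j. j mod m) ` {a..<a + m} = {..<m}"
      by (simp add: card_subset_eq)
  qed
  then have "bij_betw (\<lambda>j. j mod m) {j \<in> {a..<a + m}. Q (j mod m)} {i \<in> {..<m}. Q i}"
    by (rule bij_betw_Collect) simp
  then show ?thesis by (rule bij_betw_same_card)
qed

lemma card_mod_periodic:
  fixes m a r :: nat
  assumes "m > 0"
  shows "card {j \<in> {a..<a + m * t + r}. Q (j mod m)}
           = t * card {i \<in> {..<m}. Q i} + card {j \<in> {a..<a + r}. Q (j mod m)}"
proof (induction t)
  case 0
  show ?case by simp
next
  case (Suc t)
  let ?b = "a + m * t + r"
  have "{j \<in> {a..<a + m * Suc t + r}. Q (j mod m)}
          = {j \<in> {a..<?b}. Q (j mod m)} \<union> {j \<in> {?b..<?b + m}. Q (j mod m)}"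
    by (auto simp: algebra_simps)
  then have "card {j \<in> {a..<a + m * Suc t + r}. Q (j mod m)}
               = card {j \<in> {a..<?b}. Q (j mod m)} + card {j \<in> {?b..<?b + m}. Q (j mod m)}"
    by (simp add: card_Un_disjoint disjoint_iff)
  then show ?case using Suc card_mod_window[OF assms, of ?b Q] by simp
qed

lemma jacobsthal_window_has_coprime:
  assumes "n > 0"
  shows "\<exists>k \<in> {a..<a + int (jacobsthal n)}. coprime k (int n)"
proof -
  have "\<exists>k \<in> {b..<b + int n}. coprime k (int n)" for b
  proof
    show "b + (1 - b) mod int n \<in> {b..<b + int n}" using assms by simp
    have "(b + (1 - b) mod int n) mod int n = 1 mod int n" by (simp add: mod_add_right_eq)
    then show "coprime (b + (1 - b) mod int n) (int n)"
      by (metis coprime_1_left coprime_mod_left_iff assms of_nat_0_less_iff less_irrefl)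
  qed
  then have "\<exists>m. m > 0 \<and> (\<forall>b::int. \<exists>k \<in> {b..<b + int m}. coprime k (int n))"
    using assms by blast
  from LeastI_ex[OF this] show ?thesis unfolding jacobsthal_def by blast
qed

lemma jacobsthal_gt_if_no_coprime:
  assumes "n > 0" and "\<forall>k \<in> {a..<a + int L}. \<not> coprime k (int n)"
  shows "L < jacobsthal n"
proof (rule ccontr)
  assume "\<not> L < jacobsthal n"
  moreover obtain k where "k \<in> {a..<a + int (jacobsthal n)}" "coprime k (int n)"
    using jacobsthal_window_has_coprime[OF assms(1)] by blast
  ultimately show False using assms(2) by auto
qed

lemma coprime_mult_prod_primes:
  fixes d :: int
  assumes "coprime d (int m)" and "\<forall>p \<in> P. prime p \<and> \<not> int p dvd d"
  shows "coprime d (int (m * \<Prod>P))"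
proof -
  have "coprime d (\<Prod>p\<in>P. int p)"
  proof (rule prod_coprime_right)
    fix p assume "p \<in> P"
    then show "coprime d (int p)"
      using assms(2) prime_imp_coprime[of "int p" d] by (simp add: coprime_commute)
  qed
  then show ?thesis using assms(1) by (simp add: of_nat_prod)
qed

lemma cycle_domination_number_le:
  assumes "ucayley_cycle n cs" and "ucayley_dominating n (set cs)"
  shows "cycle_domination_number n \<le> length cs"
  unfolding cycle_domination_number_def using assms by (blast intro: Least_le)

lemma jacobsthal_mult_prod_primes_gt:
  fixes m a L :: nat
  assumes "m > 0" and "finite P" and P: "\<forall>p \<in> P. prime p \<and> m < p"
    and card_le: "card {c \<in> {a..<a + L}. coprime c m} \<le> card P"
  shows "L < jacobsthal (m * \<Prod>P)"
proof -
  define n where "n = m * \<Prod>P"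
  define C where "C = {c \<in> {a..<a + L}. coprime c m}"
  obtain h where h: "h ` C \<subseteq> P" "inj_on h C"
    using card_le_inj[of C P] card_le \<open>finite P\<close> unfolding C_def by auto
  have h_prime: "prime (h c)" if "c \<in> C" for c
    using h that P by blast
  define modulus where "modulus i = (case i of None \<Rightarrow> m | Some c \<Rightarrow> h c)" for i
  \<comment> \<open>\<open>x \<equiv> (h c - 1) c\<close> makes \<open>x + c \<equiv> h c \<cdot> c \<equiv> 0\<close> modulo \<open>h c\<close>.\<close>
  define residue where "residue i = (case i of None \<Rightarrow> 0 | Some c \<Rightarrow> (h c - 1) * c)" for i
  have "\<exists>x. \<forall>i \<in> insert None (Some ` C). [x = residue i] (mod modulus i)"
  proof (rule chinese_remainder_nat)
    show "finite (insert None (Some ` C))" unfolding C_def by simp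
    have "coprime (h c) (h c')" if "c \<in> C" "c' \<in> C" "c \<noteq> c'" for c c'
      using h that h_prime primes_coprime by (metis inj_on_eq_iff)
    moreover have "coprime (h c) m" if "c \<in> C" for c
    proof -
      have "m < h c" using h that P by blast
      then have "\<not> h c dvd m" using \<open>m > 0\<close> by (auto dest: dvd_imp_le)
      then show ?thesis using h_prime[OF that] prime_imp_coprime by blast
    qed
    ultimately show "\<forall>i \<in> insert None (Some ` C). \<forall>j \<in> insert None (Some ` C).
                       i \<noteq> j \<longrightarrow> coprime (modulus i) (modulus j)"
      by (auto simp: modulus_def ac_simps)
  qed
  then obtain x where x: "\<forall>i \<in> insert None (Some ` C). [x = residue i] (mod modulus i)"
    by blast
  have not_coprime: "\<not> coprime (x + c) n" if c: "c \<in> {a..<a + L}" for c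
  proof (cases "c \<in> C")
    case True
    have "[x + c = (h c - 1) * c + c] (mod h c)"
      using x True by (auto simp: modulus_def residue_def intro: cong_add)
    moreover have "(h c - 1) * c + c = h c * c"
      using prime_gt_0_nat[OF h_prime[OF True]] by (simp add: algebra_simps)
    ultimately have "h c dvd x + c" by (simp add: cong_def dvd_eq_mod_eq_0)
    moreover have "h c dvd n"
      unfolding n_def using h True dvd_prodI[OF \<open>finite P\<close>, of "h c" "\<lambda>p. p"] by auto
    ultimately show ?thesis using h_prime[OF True] not_coprimeI not_prime_unit by blast
  next
    case False
    then have "\<not> coprime c m" using c unfolding C_def by blast
    have "m dvd x" using x by (simp add: modulus_def residue_def cong_0_iff)
    then have "(x + c) mod m = c mod m" by (metis mod_add_left_eq add_0 dvd_imp_mod_0)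
    then have "\<not> coprime (x + c) m"
      using \<open>\<not> coprime c m\<close> \<open>m > 0\<close> by (metis coprime_mod_left_iff not_gr0)
    then show ?thesis unfolding n_def by simp
  qed
  have "\<forall>k \<in> {int (x + a)..<int (x + a) + int L}. \<not> coprime k (int n)"
  proof
    fix k assume "k \<in> {int (x + a)..<int (x + a) + int L}"
    then obtain c where "k = int (x + c)" and "c \<in> {a..<a + L}"
      by (intro that[of "nat k - x"]) auto
    then show "\<not> coprime k (int n)"
      using not_coprime by (simp only: coprime_int_iff not_False_eq_True)
  qed
  moreover have "n > 0"
    unfolding n_def using \<open>m > 0\<close> P by (simp add: prime_gt_0_nat prod_pos)
  ultimately show ?thesis using jacobsthal_gt_if_no_coprime unfolding n_def by blast
qed

lemma coprime_add_mult_iff: "coprime (a + m * b) m \<longleftrightarrow> coprime a m"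
  for a b m :: "'a :: ring_gcd"
  by (metis coprime_iff_gcd_eq_1 gcd.commute gcd_add_mult add.commute mult.commute)

definition lifted_walk :: "nat \<Rightarrow> (nat \<Rightarrow> nat) \<Rightarrow> nat \<Rightarrow> nat list" where
  "lifted_walk m \<tau> K = map (\<lambda>j. m * j + \<tau> j) [0..<K]"

locale prime_lifting =
  fixes m K :: nat and \<tau> :: "nat \<Rightarrow> nat" and P :: "nat set"
  assumes residue_lt: "\<And>j. j < K \<Longrightarrow> \<tau> j < m"
    and finite_P: "finite P" and P_nonempty: "P \<noteq> {}"
    and P_large: "\<And>p. p \<in> P \<Longrightarrow> prime p \<and> m * K < p"
begin

lemma lift_lt:
  assumes "j < K"
  shows "m * j + \<tau> j < m * K"
proof -
  have "m * j + \<tau> j < m * Suc j" using residue_lt[OF assms] by simp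
  also have "\<dots> \<le> m * K" using assms by (intro mult_le_mono2) simp
  finally show ?thesis .
qed

lemma lift_div: "j < K \<Longrightarrow> (m * j + \<tau> j) div m = j"
  using residue_lt[of j] by simp

lemma mult_K_le_mult_prod: "m * K \<le> m * \<Prod>P"
proof (cases "K = 0")
  case False
  obtain p where "p \<in> P" using P_nonempty by blast
  have "p \<le> \<Prod>P"
    using dvd_prodI[OF finite_P \<open>p \<in> P\<close>, of "\<lambda>p. p"] P_large finite_P
    by (intro dvd_imp_le) (auto simp: prime_gt_0_nat prod_pos)
  moreover have "K \<le> m * K" using False residue_lt[of 0] by simp
  ultimately have "K \<le> \<Prod>P" using P_large[OF \<open>p \<in> P\<close>] by linarith
  then show ?thesis by (rule mult_le_mono2)
qed simp

lemma lift_lt_modulus: "j < K \<Longrightarrow> m * j + \<tau> j < m * \<Prod>P"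
  using lift_lt mult_K_le_mult_prod by (rule order_less_le_trans)

lemma prime_not_dvd_lift_diff:
  assumes "p \<in> P" "i < K" "j < K" "i \<noteq> j"
  shows "\<not> int p dvd int (m * i + \<tau> i) - int (m * j + \<tau> j)"
proof
  define d where "d = int (m * i + \<tau> i) - int (m * j + \<tau> j)"
  assume "int p dvd d"
  moreover have "d \<noteq> 0"
  proof -
    have "m * i + \<tau> i \<noteq> m * j + \<tau> j" using lift_div assms(2-4) by metis
    then show ?thesis unfolding d_def right_minus_eq of_nat_eq_iff .
  qed
  ultimately have "\<bar>int p\<bar> \<le> \<bar>d\<bar>" by (rule dvd_imp_le_int[rotated])
  moreover have "\<bar>d\<bar> < int (m * K)"
    using lift_lt[OF assms(2)] lift_lt[OF assms(3)] unfolding d_def by linarith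
  moreover have "int (m * K) < int p"
    using P_large[OF assms(1)] by (simp only: of_nat_less_iff)
  ultimately show False by linarith
qed

lemma lift_adj:
  assumes "i < K" "j < K" "i \<noteq> j" and "coprime (int (\<tau> i) - int (\<tau> j)) (int m)"
  shows "ucayley_adj (m * \<Prod>P) (m * i + \<tau> i) (m * j + \<tau> j)"
proof -
  have diff_eq: "int (m * i + \<tau> i) - int (m * j + \<tau> j)
                   = (int (\<tau> i) - int (\<tau> j)) + int m * (int i - int j)"
    by (simp add: algebra_simps)
  have "coprime (int (m * i + \<tau> i) - int (m * j + \<tau> j)) (int m)"
    unfolding diff_eq coprime_add_mult_iff by (rule assms(4))
  then have "coprime (int (m * i + \<tau> i) - int (m * j + \<tau> j)) (int (m * \<Prod>P))"
    using P_large prime_not_dvd_lift_diff assms(1-3) by (intro coprime_mult_prod_primes) auto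
  then show ?thesis unfolding ucayley_adj_def using lift_lt_modulus assms(1,2) by blast
qed

lemma length_lifted_walk [simp]: "length (lifted_walk m \<tau> K) = K"
  by (simp add: lifted_walk_def)

lemma lifted_walk_nth: "j < K \<Longrightarrow> lifted_walk m \<tau> K ! j = m * j + \<tau> j"
  by (simp add: lifted_walk_def)

lemma lifted_walk_cycle:
  assumes "3 \<le> K"
    and step: "\<And>j. Suc j < K \<Longrightarrow> coprime (int (\<tau> j) - int (\<tau> (Suc j))) (int m)"
    and wrap: "coprime (int (\<tau> (K - 1)) - int (\<tau> 0)) (int m)"
  shows "ucayley_cycle (m * \<Prod>P) (lifted_walk m \<tau> K)"
proof -
  let ?cs = "lifted_walk m \<tau> K"
  have "distinct ?cs"
    unfolding lifted_walk_def distinct_map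
    by (auto simp: inj_on_def lift_div dest: arg_cong[of _ _ "\<lambda>v. v div m"])
  moreover have "set ?cs \<subseteq> {0..<m * \<Prod>P}"
    unfolding lifted_walk_def using lift_lt_modulus by auto
  moreover have "ucayley_adj (m * \<Prod>P) (?cs ! i) (?cs ! (i + 1))" if "i < length ?cs - 1" for i
    using that lift_adj[of i "Suc i"] step[of i] by (simp add: lifted_walk_nth)
  moreover have "ucayley_adj (m * \<Prod>P) (last ?cs) (hd ?cs)"
  proof -
    have "last ?cs = ?cs ! (K - 1)" "hd ?cs = ?cs ! 0"
      using assms(1) by (simp_all add: lifted_walk_def last_conv_nth hd_conv_nth)
    then show ?thesis using assms(1) lift_adj[of "K - 1" 0] wrap by (simp add: lifted_walk_nth)
  qed
  ultimately show ?thesis using assms(1) unfolding ucayley_cycle_def by simp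
qed

lemma card_lift_divisible_le_1:
  assumes "p \<in> P"
  shows "card {j. j < K \<and> int p dvd int y - int (m * j + \<tau> j)} \<le> 1"
proof -
  have "i = j" if "i < K" "j < K" "int p dvd int y - int (m * i + \<tau> i)"
      "int p dvd int y - int (m * j + \<tau> j)" for i j
  proof (rule ccontr)
    assume "i \<noteq> j"
    have diff_eq: "int (m * i + \<tau> i) - int (m * j + \<tau> j)
                     = (int y - int (m * j + \<tau> j)) - (int y - int (m * i + \<tau> i))"
      by simp
    have "int p dvd int (m * i + \<tau> i) - int (m * j + \<tau> j)"
      unfolding diff_eq by (rule dvd_diff[OF that(4) that(3)])
    then show False using prime_not_dvd_lift_diff assms that(1,2) \<open>i \<noteq> j\<close> by blast
  qed
  then show ?thesis by (subst One_nat_def, subst card_le_Suc0_iff_eq) auto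
qed

lemma lifted_walk_dominating:
  assumes many_good: "\<And>y. card P < card {j. j < K \<and> coprime (int y - int (\<tau> j)) (int m)}"
  shows "ucayley_dominating (m * \<Prod>P) (set (lifted_walk m \<tau> K))"
  unfolding ucayley_dominating_def
proof (intro conjI allI impI)
  show "set (lifted_walk m \<tau> K) \<subseteq> {0..<m * \<Prod>P}"
    unfolding lifted_walk_def using lift_lt_modulus by auto
  fix y assume "y < m * \<Prod>P"
  define good where "good = {j. j < K \<and> coprime (int y - int (\<tau> j)) (int m)}"
  define bad where "bad p = {j. j < K \<and> int p dvd int y - int (m * j + \<tau> j)}" for p
  have "card (\<Union>p\<in>P. bad p) \<le> (\<Sum>p\<in>P. card (bad p))"
    by (rule card_UN_le[OF finite_P])
  also have "\<dots> \<le> card P"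
    using sum_mono[of P "\<lambda>p. card (bad p)" "\<lambda>_. 1"] card_lift_divisible_le_1
    unfolding bad_def by simp
  finally have "\<not> good \<subseteq> (\<Union>p\<in>P. bad p)"
    using many_good[of y] card_mono[of "\<Union>p\<in>P. bad p" good] finite_P
    unfolding good_def by (auto simp: bad_def)
  then obtain j where j: "j \<in> good" "j \<notin> (\<Union>p\<in>P. bad p)" by blast
  have diff_eq: "int y - int (m * j + \<tau> j) = (int y - int (\<tau> j)) + int m * (- int j)"
    by simp
  have "coprime (int y - int (m * j + \<tau> j)) (int m)"
    using j(1) unfolding diff_eq coprime_add_mult_iff good_def by blast
  then have "coprime (int y - int (m * j + \<tau> j)) (int (m * \<Prod>P))"
    using P_large j(1,2) unfolding good_def bad_def by (intro coprime_mult_prod_primes) auto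
  then have "ucayley_adj (m * \<Prod>P) y (m * j + \<tau> j)"
    unfolding ucayley_adj_def using \<open>y < m * \<Prod>P\<close> lift_lt_modulus j(1) good_def by blast
  moreover have "m * j + \<tau> j \<in> set (lifted_walk m \<tau> K)"
    using j(1) unfolding good_def lifted_walk_def by simp
  ultimately show "y \<in> set (lifted_walk m \<tau> K)
                    \<or> (\<exists>s \<in> set (lifted_walk m \<tau> K). ucayley_adj (m * \<Prod>P) y s)"
    by blast
qed

end

text \<open>A walk in \<open>X\<^sub>3\<^sub>0\<close> from 22 to 23 such that every residue is adjacent to at least four
  of its entries. Appended to \<open>t\<close> rounds through \<open>0, \<dots>, 29\<close>, it gives every residue
  \<open>8t + 4\<close> neighbours along the closed walk \<open>residue_walk t\<close>.\<close>
definition residue_tail :: "nat list" where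
  "residue_tail = [22, 5, 4, 21, 2, 13, 0, 19, 26, 27, 14, 25, 18, 29, 16, 23]"

definition residue_walk :: "nat \<Rightarrow> nat \<Rightarrow> nat" where
  "residue_walk t j = (if j < 30 * t then j mod 30 else residue_tail ! (j - 30 * t))"

lemma residue_tail_lt: "i < 16 \<Longrightarrow> residue_tail ! i < 30"
proof -
  have "list_all (\<lambda>i. residue_tail ! i < 30) [0..<16]"
    unfolding residue_tail_def by code_simp
  then show "i < 16 \<Longrightarrow> residue_tail ! i < 30" by (simp add: list_all_iff)
qed

lemma residue_tail_step:
  "i < 15 \<Longrightarrow> coprime (int (residue_tail ! i) - int (residue_tail ! Suc i)) 30"
proof -
  have "list_all (\<lambda>i. coprime (int (residue_tail ! i) - int (residue_tail ! Suc i)) 30)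
          [0..<15]"
    unfolding residue_tail_def by code_simp
  then show "i < 15 \<Longrightarrow> ?thesis" by (simp add: list_all_iff)
qed

lemma residue_tail_neighbours:
  "r < 30 \<Longrightarrow> 4 \<le> card {i \<in> {0..<16}. coprime (int r - int (residue_tail ! i)) 30}"
proof -
  have "list_all
          (\<lambda>r. 4 \<le> length (filter (\<lambda>i. coprime (int r - int (residue_tail ! i)) 30) [0..<16]))
          [0..<30]"
    unfolding residue_tail_def by code_simp
  then show "r < 30 \<Longrightarrow> ?thesis" unfolding card_filter_upt by (simp add: list_all_iff)
qed

lemma card_coprime_diff_30:
  "r < 30 \<Longrightarrow> card {i \<in> {0..<30}. coprime (int r - int i) 30} = 8"
proof -
  have "list_all (\<lambda>r. length (filter (\<lambda>i. coprime (int r - int i) 30) [0..<30]) = 8) [0..<30]"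
    by code_simp
  then show "r < 30 \<Longrightarrow> ?thesis" unfolding card_filter_upt by (simp add: list_all_iff)
qed

lemma residue_walk_lt: "j < 30 * t + 16 \<Longrightarrow> residue_walk t j < 30"
  unfolding residue_walk_def using residue_tail_lt by auto

lemma residue_walk_step:
  assumes "Suc j < 30 * t + 16"
  shows "coprime (int (residue_walk t j) - int (residue_walk t (Suc j))) 30"
proof -
  consider "Suc j < 30 * t" | "Suc j = 30 * t" | "30 * t \<le> j" by linarith
  then show ?thesis
  proof cases
    case 1
    then have "residue_walk t (Suc j) = (if j mod 30 = 29 then 0 else Suc (j mod 30))"
      by (simp add: residue_walk_def mod_Suc)
    moreover have "coprime (29 :: int) 30" "coprime (-1 :: int) 30" by code_simp+
    ultimately show ?thesis using 1 by (simp add: residue_walk_def)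
  next
    case 2
    then have "j = 30 * (t - 1) + 29" by (cases t) auto
    then have "residue_walk t j = 29" and "residue_walk t (Suc j) = 22"
      using 2 by (simp_all add: residue_walk_def residue_tail_def)
    moreover have "coprime (7 :: int) 30" by code_simp
    ultimately show ?thesis by simp
  next
    case 3
    then have "residue_walk t j = residue_tail ! (j - 30 * t)"
      and "residue_walk t (Suc j) = residue_tail ! Suc (j - 30 * t)"
      by (simp_all add: residue_walk_def Suc_diff_le)
    then show ?thesis using residue_tail_step[of "j - 30 * t"] assms 3 by simp
  qed
qed

lemma residue_walk_wrap:
  "coprime (int (residue_walk t (30 * t + 15)) - int (residue_walk t 0)) 30"
proof -
  have "coprime (23 :: int) 30" "coprime (1 :: int) 30" by code_simp+
  then show ?thesis by (cases "t = 0") (simp_all add: residue_walk_def residue_tail_def)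
qed

lemma coprime_30_diff_mod: "coprime (int y - int i) 30 \<longleftrightarrow> coprime (int (y mod 30) - int i) 30"
  by (rule coprime_cong_cong_left) (simp add: cong_def of_nat_mod mod_diff_left_eq)

lemma residue_walk_neighbours:
  "8 * t + 4 \<le> card {j. j < 30 * t + 16 \<and> coprime (int y - int (residue_walk t j)) 30}"
proof -
  define Q where "Q i \<longleftrightarrow> coprime (int y - int i) 30" for i
  define A where "A = {j \<in> {0..<30 * t}. Q (j mod 30)}"
  define B where "B = (\<lambda>i. 30 * t + i) ` {i \<in> {0..<16}. Q (residue_tail ! i)}"
  have "card A = 8 * t"
    using card_mod_periodic[of 30 0 t 0 Q] card_coprime_diff_30[of "y mod 30"]
    unfolding A_def Q_def coprime_30_diff_mod[of y] by (simp add: lessThan_atLeast0)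
  moreover have "4 \<le> card B"
    using residue_tail_neighbours[of "y mod 30"] unfolding B_def Q_def coprime_30_diff_mod[of y]
    by (subst card_image) (auto simp: inj_on_def)
  moreover have "card (A \<union> B) = card A + card B"
    by (rule card_Un_disjoint) (auto simp: A_def B_def)
  moreover have "A \<union> B \<subseteq> {j. j < 30 * t + 16 \<and> coprime (int y - int (residue_walk t j)) 30}"
    by (auto simp: A_def B_def Q_def residue_walk_def)
  then have "card (A \<union> B) \<le> card {j. j < 30 * t + 16 \<and> coprime (int y - int (residue_walk t j)) 30}"
    by (intro card_mono) auto
  ultimately show ?thesis by linarith
qed

lemma card_window_coprime_30: "card {c \<in> {20..<20 + (30 * t + 17)}. coprime c (30 :: nat)} = 8 * t + 3"
proof -
  have "card {i \<in> {..<30}. coprime i (30 :: nat)} = 8"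
    unfolding lessThan_atLeast0 card_filter_upt by code_simp
  moreover have "card {j \<in> {20..<20 + 17}. coprime (j mod 30) (30 :: nat)} = 3"
    unfolding card_filter_upt by code_simp
  ultimately show ?thesis
    using card_mod_periodic[of 30 20 t 17 "\<lambda>i. coprime i (30 :: nat)"] by (simp add: add.assoc)
qed

lemma large_primes_exist: "\<exists>P :: nat set. finite P \<and> card P = k \<and> (\<forall>p \<in> P. prime p \<and> B < p)"
proof -
  let ?Q = "{p :: nat. prime p \<and> B < p}"
  have "infinite ?Q"
  proof
    assume fin: "finite ?Q"
    obtain p where p: "prime p" "max B (Max ?Q) < p"
      using bigger_prime by blast
    then have "p \<le> Max ?Q" by (intro Max_ge[OF fin]) simp
    moreover have "Max ?Q < p" using p(2) by simp
    ultimately show False by simp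
  qed
  then obtain P where "finite P" "card P = k" "P \<subseteq> ?Q"
    using infinite_arbitrarily_large by blast
  then show ?thesis by blast
qed

lemma card_le_omega_mult_prod:
  assumes "m > 0" and "finite P" and "\<forall>p \<in> P. prime p"
  shows "card P \<le> omega (m * \<Prod>P)"
proof -
  have "\<Prod>P > 0" using assms(3) by (intro prod_pos) (auto simp: prime_gt_0_nat)
  then have "P \<subseteq> prime_factors (m * \<Prod>P)"
    using assms dvd_prodI[OF assms(2), of _ "\<lambda>p. p"] by (auto simp: in_prime_factors_iff)
  then show ?thesis unfolding omega_def by (rule card_mono[rotated]) simp
qed

lemma mult_prod_large_primes_in_M_c2:
  assumes "finite P" and "card P = 8 * t + 3"
    and large: "\<forall>p \<in> P. prime p \<and> 30 * (30 * t + 16) < p"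
  shows "30 * \<Prod>P \<in> M_c2"
proof -
  define K where "K = 30 * t + 16"
  interpret prime_lifting 30 K "residue_walk t" P
    using assms residue_walk_lt by unfold_locales (auto simp: K_def)
  have "ucayley_cycle (30 * \<Prod>P) (lifted_walk 30 (residue_walk t) K)"
    using residue_walk_step residue_walk_wrap
    by (intro lifted_walk_cycle) (auto simp: K_def add.commute)
  moreover have "ucayley_dominating (30 * \<Prod>P) (set (lifted_walk 30 (residue_walk t) K))"
  proof (rule lifted_walk_dominating)
    show "card P < card {j. j < K \<and> coprime (int y - int (residue_walk t j)) (int 30)}" for y
      using residue_walk_neighbours[of t y] assms(2) unfolding K_def by simp
  qed
  ultimately have "cycle_domination_number (30 * \<Prod>P) \<le> K"
    using cycle_domination_number_le by fastforce
  moreover have "30 * t + 17 < jacobsthal (30 * \<Prod>P)"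
  proof (rule jacobsthal_mult_prod_primes_gt[where a = 20])
    show "\<forall>p \<in> P. prime p \<and> 30 < p" using large by auto
  qed (use assms(1,2) card_window_coprime_30[of t] in auto)
  moreover have "\<Prod>P > 0" using large by (intro prod_pos) (auto simp: prime_gt_0_nat)
  ultimately show ?thesis unfolding M_c2_def K_def by simp
qed

theorem theorem3p1:
  shows "\<forall>N::nat. \<exists>n \<in> M_c2. omega n > N"
proof
  fix N :: nat
  obtain P where P: "finite P" "card P = 8 * N + 3" "\<forall>p \<in> P. prime p \<and> 30 * (30 * N + 16) < p"
    using large_primes_exist by blast
  then have "30 * \<Prod>P \<in> M_c2" by (rule mult_prod_large_primes_in_M_c2)
  moreover have "N < omega (30 * \<Prod>P)" using card_le_omega_mult_prod[of 30 P] P by simp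
  ultimately show "\<exists>n \<in> M_c2. omega n > N" by blast
qed

end
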